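(* Let $W=W_0\supset W_1\supset W_2\supset\cdots$ be a filtered Lie algebra with $\bigcap_{i\ge 0}W_i=0$ and $[W_i,W_j]\subset W_{i+j}$. Let $v^0,v^1,v^2,\dots$ be elements of $W$ such that $v^{q+1}-v^{q}\in W_{q+1}$ for all $q\ge 0$. Put $K_i=W_i\oplus W_i$ for $i\ge 0$ (and $K_i=K_0$ for $i<0$), and define linear maps $\partial_q:K_0\to K_0$ by $\partial_{-1}=0$ and $\partial_q(x,y)=([v^q,y],0)$ for $q\ge 0$. For $r\ge -1$ and integers $p$ let $Z^r_p=\{z\in K_p:\ \partial_r z\in K_{p+r}\}$. Then for every $r\ge 0$ and every $p\ge 0$: if $z\in Z^r_p$ or $z\in Z^{r-1}_p$, then $\partial_r z-\partial_{r-1}z\in Z^{r-1}_{p+r}$.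
   Context: This is the complex used to model normal form computations: the first summand of $K_i$ is the space in which the normal form lives, the second the space of transformations, and $v^q$ is the vector field after $q$ normalization steps. *)

theory Defs
  imports Complex_Main "HOL-Library.Product_Plus"
begin

definition lie_algebra :: "('k::field \<Rightarrow> 'v::ab_group_add \<Rightarrow> 'v) \<Rightarrow> ('v \<Rightarrow> 'v \<Rightarrow> 'v) \<Rightarrow> bool" where
  "lie_algebra sc br \<longleftrightarrow>
     vector_space sc
   \<and> (\<forall>x. Vector_Spaces.linear sc sc (br x))
   \<and> (\<forall>y. Vector_Spaces.linear sc sc (\<lambda>x. br x y))
   \<and> (\<forall>x. br x x = 0)
   \<and> (\<forall>x y z. br x (br y z) + br y (br z x) + br z (br x y) = 0)"

definition filtered_lie_algebra ::
  "('k::field \<Rightarrow> 'v::ab_group_add \<Rightarrow> 'v) \<Rightarrow> ('v \<Rightarrow> 'v \<Rightarrow> 'v) \<Rightarrow> (nat \<Rightarrow> 'v set) \<Rightarrow> bool" where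
  "filtered_lie_algebra sc br W \<longleftrightarrow>
     lie_algebra sc br
   \<and> W 0 = UNIV
   \<and> (\<forall>i. module.subspace sc (W i))
   \<and> (\<forall>i. W (Suc i) \<subseteq> W i)
   \<and> (\<Inter>i. W i) = {0}
   \<and> (\<forall>i j x y. x \<in> W i \<longrightarrow> y \<in> W j \<longrightarrow> br x y \<in> W (i + j))"

text \<open>K_i = W_i \<oplus> W_i for i \<ge> 0, and K_i = K_0 for i < 0.\<close>
definition Kfil :: "(nat \<Rightarrow> 'v set) \<Rightarrow> int \<Rightarrow> ('v \<times> 'v) set" where
  "Kfil W i = W (nat i) \<times> W (nat i)"

definition dq :: "('v::ab_group_add \<Rightarrow> 'v \<Rightarrow> 'v) \<Rightarrow> (nat \<Rightarrow> 'v) \<Rightarrow> int \<Rightarrow> 'v \<times> 'v \<Rightarrow> 'v \<times> 'v" where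
  "dq br v q z = (if q < 0 then (0, 0) else (br (v (nat q)) (snd z), 0))"

definition Zsp :: "(nat \<Rightarrow> 'v set) \<Rightarrow> ('v::ab_group_add \<Rightarrow> 'v \<Rightarrow> 'v) \<Rightarrow> (nat \<Rightarrow> 'v) \<Rightarrow> int \<Rightarrow> int \<Rightarrow> ('v \<times> 'v) set" where
  "Zsp W br v r p = {z \<in> Kfil W p. dq br v r z \<in> Kfil W (p + r)}"

end

theory Submission
  imports Defs
begin

text \<open>The difference \<open>\<partial>\<^sub>r - \<partial>\<^sub>r\<^sub>-\<^sub>1\<close> is \<open>(x, y) \<mapsto> ([v\<^sup>r - v\<^sup>r\<^sup>-\<^sup>1, y], 0)\<close>
  (with \<open>v\<^sup>-\<^sup>1 = 0\<close>). Since \<open>v\<^sup>r - v\<^sup>r\<^sup>-\<^sup>1 \<in> W\<^sub>r\<close> and \<open>y \<in> W\<^sub>p\<close>, its value lies in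
  \<open>K\<^sub>p\<^sub>+\<^sub>r\<close>; and having second component \<open>0\<close>, it is annihilated by every \<open>\<partial>\<^sub>q\<close>.\<close>

lemma lie_algebra_bracket_zero_right:
  assumes "lie_algebra sc br"
  shows "br x 0 = 0"
  using assms unfolding lie_algebra_def
  by (metis Vector_Spaces.linear.axioms(3) module_hom.zero)

lemma lie_algebra_bracket_diff_left:
  assumes "lie_algebra sc br"
  shows "br (a - b) y = br a y - br b y"
proof -
  have "module_hom sc sc (\<lambda>x. br x y)"
    using assms unfolding lie_algebra_def by (auto dest: Vector_Spaces.linear.axioms(3))
  then show ?thesis by (rule module_hom.diff)
qed

lemma filtered_lie_algebra_zero_mem:
  assumes "filtered_lie_algebra sc br W"
  shows "0 \<in> W i"
proof -
  have "module sc"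
    using assms by (simp add: filtered_lie_algebra_def lie_algebra_def module_iff_vector_space)
  moreover have "module.subspace sc (W i)"
    using assms by (simp add: filtered_lie_algebra_def)
  ultimately show ?thesis by (rule module.subspace_0)
qed

lemma filtered_lie_algebra_bracket_mem:
  assumes "filtered_lie_algebra sc br W" "x \<in> W i" "y \<in> W j"
  shows "br x y \<in> W (i + j)"
  using assms unfolding filtered_lie_algebra_def by blast

fun successive_diff :: "(nat \<Rightarrow> 'v::ab_group_add) \<Rightarrow> nat \<Rightarrow> 'v" where
  "successive_diff v 0 = v 0"
| "successive_diff v (Suc q) = v (Suc q) - v q"

lemma successive_diff_mem:
  assumes "W 0 = UNIV" "\<And>q. v (Suc q) - v q \<in> W (Suc q)"
  shows "successive_diff v q \<in> W q"
  using assms by (cases q) auto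

lemma dq_diff_pred:
  assumes "lie_algebra sc br" "r \<ge> 0"
  shows "dq br v r z - dq br v (r - 1) z = (br (successive_diff v (nat r)) (snd z), 0)"
proof (cases "nat r")
  case 0
  with assms(2) show ?thesis by (simp add: dq_def)
next
  case (Suc q)
  with assms(2) have "nat (r - 1) = q" "\<not> r - 1 < 0" "\<not> r < 0"
    by (simp_all add: nat_diff_distrib)
  then have "dq br v r z = (br (v (Suc q)) (snd z), 0)"
    and "dq br v (r - 1) z = (br (v q) (snd z), 0)"
    unfolding dq_def using Suc by (simp_all only: if_False)
  then show ?thesis
    by (simp add: Suc lie_algebra_bracket_diff_left[OF assms(1)])
qed

lemma dq_Pair_zero:
  assumes "lie_algebra sc br"
  shows "dq br v q (x, 0) = (0, 0)"
  by (simp add: dq_def lie_algebra_bracket_zero_right[OF assms])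

lemma Zsp_Pair_zero:
  assumes "filtered_lie_algebra sc br W" "x \<in> W (nat p)"
  shows "(x, 0) \<in> Zsp W br v q p"
proof -
  have "lie_algebra sc br" using assms(1) by (simp add: filtered_lie_algebra_def)
  then show ?thesis
    using assms by (simp add: Zsp_def Kfil_def dq_Pair_zero filtered_lie_algebra_zero_mem)
qed

lemma Zsp_snd_mem: "z \<in> Zsp W br v r p \<Longrightarrow> snd z \<in> W (nat p)"
  by (auto simp: Zsp_def Kfil_def)

theorem mainTheorem1:
  fixes sc :: "'k::field \<Rightarrow> 'v::ab_group_add \<Rightarrow> 'v"
    and br :: "'v \<Rightarrow> 'v \<Rightarrow> 'v"
    and W :: "nat \<Rightarrow> 'v set"
    and v :: "nat \<Rightarrow> 'v"
    and r p :: int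
    and z :: "'v \<times> 'v"
  assumes "filtered_lie_algebra sc br W"
    and "\<And>q. v (Suc q) - v q \<in> W (Suc q)"
    and "r \<ge> 0" and "p \<ge> 0"
    and "z \<in> Zsp W br v r p \<or> z \<in> Zsp W br v (r - 1) p"
  shows "dq br v r z - dq br v (r - 1) z \<in> Zsp W br v (r - 1) (p + r)"
proof -
  have lie: "lie_algebra sc br" and W0: "W 0 = UNIV"
    using assms(1) by (simp_all add: filtered_lie_algebra_def)
  have "snd z \<in> W (nat p)" using assms(5) by (auto dest: Zsp_snd_mem)
  with assms(1) successive_diff_mem[OF W0 assms(2)]
  have "br (successive_diff v (nat r)) (snd z) \<in> W (nat r + nat p)"
    by (rule filtered_lie_algebra_bracket_mem)
  also have "nat r + nat p = nat (p + r)" using assms(3,4) by simp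
  finally have "(br (successive_diff v (nat r)) (snd z), 0) \<in> Zsp W br v (r - 1) (p + r)"
    by (rule Zsp_Pair_zero[OF assms(1)])
  then show ?thesis by (simp only: dq_diff_pred[OF lie assms(3)])
qed

end
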